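(* Let $c:\mathcal J\to\mathbb Q$ be a consistent map. Then $\Phi_c(\pi(r))=\Omega(r)$ for all $r\in\mathbb Q^\times$ (i.e., $\Phi_c$ extends $\Omega$) if and only if $c(\mathbb Q,p)=-1$ for every non-Archimedean place (prime) $p$ of $\mathbb Q$.
   Context: Let $\overline{\mathbb Q}$ be an algebraic closure of $\mathbb Q$, $A$ the ring of algebraic integers, $\mathcal S=\overline{\mathbb Q}^\times/A^\times$ (a $\mathbb Q$-vector space, written multiplicatively with scalar action $\alpha\mapsto\alpha^r$), and $\pi:\overline{\mathbb Q}^\times\to\mathcal S$ the canonical map. $\Omega:\mathbb Q^\times\to\mathbb Z$ is the unique group homomorphism with $\Omega(p)=1$ for every prime $p$ (and $\Omega(-1)=0$), which is well defined on $\pi(\mathbb Q^\times)$. For a number field $K$ and non-Archimedean place $v$ of $K$, $p_v$ is the prime below $v$, $K_v$ the completion, and $\|\cdot\|_v$ the extension to $K_v$ of the $p_v$-adic absolute value on $\mathbb Q_{p_v}$. Let $\mathcal H_K=\pi(K^\times)$, $\mathcal S_K=\{\alpha\in\mathcal S:\alpha^n\in\mathcal H_K\text{ for some }n\in\mathbb N\}$, and $\|\alpha\|_v=\|\alpha^n\|_v^{1/n}$ for $\alpha\in\mathcal S_K$ with $\alpha^n\in\mathcal H_K$. Let $\mathcal J=\{(K,v)\}$ be the set of pairs of a number field and a non-Archimedean place of it. A map $c:\mathcal J\to\mathbb Q$ is consistent if $c(K,v)=\sum_{w\mid v}c(L,w)$ for all number fields $K$, finite extensions $L/K$ and non-Archimedean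 places $v$ of $K$. For consistent $c$, $\Phi_c:\mathcal S\to\mathbb Q$ is $\Phi_c(\alpha)=\sum_{v}\frac{c(K,v)}{\log p_v}\log\|\alpha\|_v$ over non-Archimedean places of any number field $K$ with $\alpha\in\mathcal S_K$ (independent of $K$). *)

theory Defs
  imports "HOL-Computational_Algebra.Computational_Algebra"
begin

text \<open>Ambient algebraic closure: the algebraic numbers inside the complex numbers.\<close>

definition number_field :: "complex set \<Rightarrow> bool" where
  "number_field K \<longleftrightarrow>
     0 \<in> K \<and> 1 \<in> K \<and>
     (\<forall>x\<in>K. \<forall>y\<in>K. x + y \<in> K \<and> x - y \<in> K \<and> x * y \<in> K) \<and>
     (\<forall>x\<in>K. x \<noteq> 0 \<longrightarrow> inverse x \<in> K) \<and>
     (\<exists>bs :: complex list. \<forall>x\<in>K. \<exists>q :: nat \<Rightarrow> rat.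
         x = (\<Sum>i<length bs. of_rat (q i) * bs ! i))"

definition QQ :: "complex set" where
  "QQ = range (of_rat :: rat \<Rightarrow> complex)"

definition padic_val :: "nat \<Rightarrow> rat \<Rightarrow> int" where
  "padic_val p r = (case quotient_of r of (a, b) \<Rightarrow>
      int (multiplicity (int p) a) - int (multiplicity (int p) b))"

definition padic_abs :: "nat \<Rightarrow> rat \<Rightarrow> real" where
  "padic_abs p r = (if r = 0 then 0 else real p powr (- real_of_int (padic_val p r)))"

text \<open>A non-Archimedean place v of a number field K is represented by its normalized absolute
  value, i.e. the restriction to K of the absolute value on the completion K_v that extends the
  p_v-adic absolute value of Q_{p_v}.\<close>
definition nonarch_place :: "complex set \<Rightarrow> (complex \<Rightarrow> real) \<Rightarrow> bool" where
  "nonarch_place K v \<longleftrightarrow>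
     (\<forall>x. x \<notin> K \<longrightarrow> v x = 0) \<and>
     (\<forall>x\<in>K. 0 \<le> v x \<and> (v x = 0 \<longleftrightarrow> x = 0)) \<and>
     (\<forall>x\<in>K. \<forall>y\<in>K. v (x * y) = v x * v y) \<and>
     (\<forall>x\<in>K. \<forall>y\<in>K. v (x + y) \<le> max (v x) (v y)) \<and>
     (\<exists>p. prime p \<and> (\<forall>q. v (of_rat q) = padic_abs p q))"

definition place_prime :: "(complex \<Rightarrow> real) \<Rightarrow> nat" where
  "place_prime v = (THE p. prime p \<and> (\<forall>q. v (of_rat q) = padic_abs p q))"

definition alg_int :: "complex \<Rightarrow> bool" where
  "alg_int x \<longleftrightarrow> (\<exists>p :: int poly. lead_coeff p = 1 \<and> poly (map_poly of_int p) x = 0)"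

definition alg_int_unit :: "complex \<Rightarrow> bool" where
  "alg_int_unit u \<longleftrightarrow> u \<noteq> 0 \<and> alg_int u \<and> alg_int (inverse u)"

text \<open>Elements of S = Qbar^*/A^* are represented as the cosets (sets of complex numbers);
  pi is the canonical map.\<close>
definition piS :: "complex \<Rightarrow> complex set" where
  "piS x = {y. y \<noteq> 0 \<and> alg_int_unit (y / x)}"

definition S_set :: "complex set set" where
  "S_set = piS ` {x. algebraic x \<and> x \<noteq> 0}"

text \<open>n-th power in S (well defined on cosets).\<close>
definition powS :: "complex set \<Rightarrow> nat \<Rightarrow> complex set" where
  "powS \<alpha> n = piS ((SOME x. x \<in> \<alpha>) ^ n)"

definition in_SK :: "complex set \<Rightarrow> complex set \<Rightarrow> bool" where
  "in_SK K \<alpha> \<longleftrightarrow> \<alpha> \<in> S_set \<and> (\<exists>n>0. \<exists>y\<in>K. y \<noteq> 0 \<and> powS \<alpha> n = piS y)"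

definition normS :: "complex set \<Rightarrow> (complex \<Rightarrow> real) \<Rightarrow> complex set \<Rightarrow> real" where
  "normS K v \<alpha> = (case (SOME (n, y). n > 0 \<and> y \<in> K \<and> y \<noteq> 0 \<and> powS \<alpha> n = piS y) of
      (n, y) \<Rightarrow> v y powr (1 / real n))"

definition consistent :: "(complex set \<times> (complex \<Rightarrow> real) \<Rightarrow> rat) \<Rightarrow> bool" where
  "consistent c \<longleftrightarrow>
     (\<forall>K L v. number_field K \<longrightarrow> number_field L \<longrightarrow> K \<subseteq> L \<longrightarrow> nonarch_place K v \<longrightarrow>
        c (K, v) = (\<Sum>w \<in> {w. nonarch_place L w \<and> (\<forall>x\<in>K. w x = v x)}. c (L, w)))"

text \<open>Phi_c(alpha) = sum over non-Archimedean places v of K of c(K,v)/log p_v * log ||alpha||_v,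
  for any number field K with alpha in S_K (here chosen by Hilbert choice; only the finitely many
  places with nonzero log ||alpha||_v contribute).\<close>
definition PhiS :: "(complex set \<times> (complex \<Rightarrow> real) \<Rightarrow> rat) \<Rightarrow> complex set \<Rightarrow> real" where
  "PhiS c \<alpha> = (let K = (SOME K. number_field K \<and> in_SK K \<alpha>) in
      (\<Sum>v \<in> {v. nonarch_place K v \<and> normS K v \<alpha> \<noteq> 1}.
          real_of_rat (c (K, v)) / ln (real (place_prime v)) * ln (normS K v \<alpha>)))"

definition Omega :: "rat \<Rightarrow> int" where
  "Omega r = (case quotient_of r of (a, b) \<Rightarrow>
      int (size (prime_factorization (nat \<bar>a\<bar>))) - int (size (prime_factorization (nat \<bar>b\<bar>))))"

end

(* For r in Q^* the class pi(r) lies in S_Q, and at every non-Archimedean place w of a number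
   field K we have ||pi(r)||_w = |r|_(p_w): the element y with pi(r)^n = pi(y) used to define the
   norm differs from r^n by a unit of A, and a unit u of A has |u|_w = 1 because integrality bounds
   both |u|_w and |1/u|_w by 1.  Hence Phi_c(pi(r)) = - sum_w c(K,w) v_(p_w)(r), and consistency
   for Q <= K collapses the places above p into c(Q,p), so Phi_c(pi(r)) = - sum_p c(Q,p) v_p(r).
   As Omega(r) = sum_p v_p(r), the condition c(Q,p) = -1 makes Phi_c extend Omega; conversely
   r = p gives -c(Q,p) = Omega(p) = 1. *)

theory Submission
  imports Defs "Jordan_Normal_Form.Char_Poly"
begin

section \<open>Algebraic integers and their units\<close>

lemma alg_int_iff_algebraic_int: "alg_int x \<longleftrightarrow> algebraic_int x"
  unfolding alg_int_def algebraic_int_altdef_ipoly by blast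

lemma algebraic_int_monic_relation:
  fixes a :: "'a :: field_char_0"
  assumes "algebraic_int a"
  obtains m and c :: "nat \<Rightarrow> int" where "m > 0" "a ^ m = (\<Sum>i<m. of_int (c i) * a ^ i)"
proof -
  obtain p :: "int poly" where p: "lead_coeff p = 1" "poly (map_poly of_int p) a = 0"
    using assms unfolding algebraic_int_altdef_ipoly by blast
  have "degree p > 0"
    using p by (cases "degree p") (auto simp: poly_altdef degree_map_poly)
  moreover have "0 = (\<Sum>i<degree p. of_int (coeff p i) * a ^ i) + a ^ degree p"
    using p by (simp add: poly_altdef degree_map_poly lessThan_Suc_atMost[symmetric])
  hence "a ^ degree p = (\<Sum>i<degree p. of_int (- coeff p i) * a ^ i)"
    by (simp add: sum_negf eq_neg_iff_add_eq_0 add.commute)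
  ultimately show ?thesis by (rule that)
qed

lemma algebraic_int_times_power_in_span:
  fixes a :: "'a :: field_char_0"
  assumes "algebraic_int a"
  obtains m where "m > 0" "\<forall>i<m. \<exists>c :: nat \<Rightarrow> int. a * a ^ i = (\<Sum>j<m. of_int (c j) * a ^ j)"
proof -
  obtain m and c :: "nat \<Rightarrow> int" where m: "m > 0" and c: "a ^ m = (\<Sum>i<m. of_int (c i) * a ^ i)"
    using algebraic_int_monic_relation[OF assms] .
  have "\<exists>c :: nat \<Rightarrow> int. a * a ^ i = (\<Sum>j<m. of_int (c j) * a ^ j)" if "i < m" for i
  proof (cases "Suc i < m")
    case True
    have "a * a ^ i = (\<Sum>j<m. of_int (if j = Suc i then 1 else 0) * a ^ j)"
      using True by (subst sum.cong[OF refl, of _ _ "\<lambda>j. if j = Suc i then a ^ j else 0"]) auto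
    thus ?thesis by (rule exI[of _ "\<lambda>j. if j = Suc i then 1 else 0"])
  next
    case False
    hence "Suc i = m" using that by simp
    thus ?thesis using c by auto
  qed
  thus ?thesis using m that by blast
qed

text \<open>The determinant trick: a number that maps a nonzero finitely generated \<open>\<int>\<close>-module into
  itself is an eigenvalue of an integer matrix, hence a root of its monic characteristic polynomial.\<close>
lemma algebraic_int_if_stabilises_int_span:
  fixes g :: "nat \<Rightarrow> 'a :: field_char_0"
  assumes "i0 < N" "g i0 \<noteq> 0"
    and "\<forall>i<N. \<exists>c :: nat \<Rightarrow> int. z * g i = (\<Sum>j<N. of_int (c j) * g j)"
  shows "algebraic_int z"
proof -
  obtain C :: "nat \<Rightarrow> nat \<Rightarrow> int" where C: "\<forall>i<N. z * g i = (\<Sum>j<N. of_int (C i j) * g j)"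
    using assms(3) by metis
  define A :: "int mat" where "A = mat N N (\<lambda>(i, j). C i j)"
  have A: "A \<in> carrier_mat N N" unfolding A_def by simp
  have "map_mat of_int A *\<^sub>v vec N g = z \<cdot>\<^sub>v vec N g"
    using C by (intro eq_vecI) (auto simp: A_def scalar_prod_def atLeast0LessThan)
  moreover have "vec N g \<noteq> 0\<^sub>v N"
    using assms(1,2) by (metis index_vec index_zero_vec(1))
  ultimately have "eigenvalue (map_mat of_int A) z"
    using A unfolding eigenvalue_def eigenvector_def by (intro exI[of _ "vec N g"]) auto
  hence "poly (map_poly of_int (char_poly A)) z = 0"
    using eigenvalue_root_char_poly[of "map_mat of_int A :: 'a mat" N] A
    by (simp add: of_int_hom.char_poly_hom[OF A])
  moreover have "lead_coeff (char_poly A) = 1"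
    using degree_monic_char_poly[OF A] by simp
  ultimately show ?thesis
    unfolding algebraic_int_altdef_ipoly by blast
qed

lemma sum_lessThan_mult_div_mod:
  fixes F :: "nat \<Rightarrow> nat \<Rightarrow> 'a :: comm_monoid_add"
  shows "(\<Sum>l<m * k. F (l div k) (l mod k)) = (\<Sum>i<m. \<Sum>j<k. F i j)"
proof (induction m)
  case (Suc m)
  have "(\<Sum>l<Suc m * k. F (l div k) (l mod k))
      = (\<Sum>l<m * k. F (l div k) (l mod k)) + (\<Sum>l\<in>{m * k..<m * k + k}. F (l div k) (l mod k))"
    by (simp add: atLeast0LessThan[symmetric] sum.atLeastLessThan_concat add.commute)
  also have "(\<Sum>l\<in>{m * k..<m * k + k}. F (l div k) (l mod k)) = (\<Sum>j<k. F m j)"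
    by (subst sum.atLeastLessThan_shift_0) (auto simp: atLeast0LessThan intro: sum.cong)
  finally show ?case using Suc by simp
qed simp

lemma algebraic_int_mult:
  fixes a b :: "'a :: field_char_0"
  assumes "algebraic_int a" "algebraic_int b"
  shows "algebraic_int (a * b)"
proof -
  obtain m where m: "m > 0" "\<forall>i<m. \<exists>c :: nat \<Rightarrow> int. a * a ^ i = (\<Sum>j<m. of_int (c j) * a ^ j)"
    using algebraic_int_times_power_in_span[OF assms(1)] .
  obtain k where k: "k > 0" "\<forall>i<k. \<exists>c :: nat \<Rightarrow> int. b * b ^ i = (\<Sum>j<k. of_int (c j) * b ^ j)"
    using algebraic_int_times_power_in_span[OF assms(2)] .
  define g where "g l = a ^ (l div k) * b ^ (l mod k)" for l
  have "\<exists>e :: nat \<Rightarrow> int. a * b * g l = (\<Sum>j<m * k. of_int (e j) * g j)" if l: "l < m * k" for l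
  proof -
    have "l div k < m" using l k(1) by (simp add: div_less_iff_less_mult mult.commute)
    then obtain c :: "nat \<Rightarrow> int" where c: "a * a ^ (l div k) = (\<Sum>i<m. of_int (c i) * a ^ i)"
      using m(2) by blast
    obtain d :: "nat \<Rightarrow> int" where d: "b * b ^ (l mod k) = (\<Sum>j<k. of_int (d j) * b ^ j)"
      using k by (meson mod_less_divisor)
    have "a * b * g l = (a * a ^ (l div k)) * (b * b ^ (l mod k))"
      by (simp add: g_def algebra_simps)
    also have "\<dots> = (\<Sum>i<m. \<Sum>j<k. of_int (c i * d j) * (a ^ i * b ^ j))"
      unfolding c d sum_product by (simp add: algebra_simps)
    also have "\<dots> = (\<Sum>j<m * k. of_int (c (j div k) * d (j mod k)) * g j)"
      unfolding g_def by (rule sum_lessThan_mult_div_mod[symmetric])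
    finally show ?thesis by (rule exI[of _ "\<lambda>j. c (j div k) * d (j mod k)"])
  qed
  moreover have "g 0 \<noteq> 0" by (simp add: g_def)
  ultimately show ?thesis
    using m(1) k(1) by (intro algebraic_int_if_stabilises_int_span[of 0 "m * k" g]) auto
qed

lemma alg_int_unit_iff: "alg_int_unit u \<longleftrightarrow> u \<noteq> 0 \<and> algebraic_int u \<and> algebraic_int (inverse u)"
  by (simp add: alg_int_unit_def alg_int_iff_algebraic_int)

lemma alg_int_unit_1: "alg_int_unit 1"
  by (simp add: alg_int_unit_iff)

lemma alg_int_unit_mult: "alg_int_unit x \<Longrightarrow> alg_int_unit y \<Longrightarrow> alg_int_unit (x * y)"
  by (auto simp: alg_int_unit_iff inverse_mult_distrib intro: algebraic_int_mult)

lemma alg_int_unit_inverse: "alg_int_unit x \<Longrightarrow> alg_int_unit (inverse x)"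
  by (auto simp: alg_int_unit_iff)

lemma alg_int_unit_power: "alg_int_unit x \<Longrightarrow> alg_int_unit (x ^ n)"
  by (induction n) (simp_all add: alg_int_unit_1 alg_int_unit_mult)

lemma piS_self: "x \<noteq> 0 \<Longrightarrow> x \<in> piS x"
  by (simp add: piS_def alg_int_unit_1)

lemma piS_eqI:
  assumes "x \<in> piS r" "r \<noteq> 0"
  shows "piS x = piS r"
proof -
  have x: "x \<noteq> 0" "alg_int_unit (x / r)"
    using assms(1) by (auto simp: piS_def)
  have "alg_int_unit (y / x) \<longleftrightarrow> alg_int_unit (y / r)" for y
  proof
    assume "alg_int_unit (y / x)"
    from alg_int_unit_mult[OF this x(2)] show "alg_int_unit (y / r)"
      using x(1) by simp
  next
    assume "alg_int_unit (y / r)"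
    from alg_int_unit_mult[OF this alg_int_unit_inverse[OF x(2)]] show "alg_int_unit (y / x)"
      using assms(2) by simp
  qed
  thus ?thesis by (auto simp: piS_def)
qed

section \<open>The \<open>p\<close>-adic valuation on \<open>\<rat>\<close>\<close>

lemma multiplicity_int_int: "multiplicity (int p) (int n) = multiplicity p n"
proof -
  have "{k. int p ^ k dvd int n} = {k. p ^ k dvd n}"
    by (metis of_nat_power int_dvd_int_iff)
  thus ?thesis by (simp add: multiplicity_def)
qed

lemma multiplicity_int_eq_nat_abs: "multiplicity (int p) a = multiplicity p (nat \<bar>a\<bar>)"
proof -
  have "multiplicity (int p) a = multiplicity (int p) \<bar>a\<bar>"
    using multiplicity_normalize_right[of "int p" a] by simp
  thus ?thesis by (simp flip: multiplicity_int_int)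
qed

lemma rat_cases_of_int_divide:
  fixes r :: rat
  obtains a b :: int where "b > 0" "r = of_int a / of_int b"
  by (cases r) (simp add: Fract_of_int_quotient)

lemma padic_val_of_int_divide:
  assumes "prime p" "a \<noteq> 0" "b \<noteq> 0"
  shows "padic_val p (of_int a / of_int b) = int (multiplicity (int p) a) - int (multiplicity (int p) b)"
proof -
  obtain a' b' where q: "quotient_of (of_int a / of_int b) = (a', b')"
    by (cases "quotient_of (of_int a / of_int b)")
  have "b' > 0" using q quotient_of_denom_pos by blast
  moreover have eq: "(of_int a / of_int b :: rat) = of_int a' / of_int b'"
    using quotient_of_div[OF q] .
  ultimately have "a' \<noteq> 0" and "of_int (a * b') = (of_int (a' * b) :: rat)"
    using assms(2,3) by (auto simp: field_simps)
  hence "multiplicity (int p) (a * b') = multiplicity (int p) (a' * b)"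
    by (simp only: of_int_eq_iff)
  hence "multiplicity (int p) a + multiplicity (int p) b' = multiplicity (int p) a' + multiplicity (int p) b"
    using assms \<open>b' > 0\<close> \<open>a' \<noteq> 0\<close> by (simp add: prime_elem_multiplicity_mult_distrib)
  thus ?thesis unfolding padic_val_def q by simp
qed

lemma padic_val_of_int:
  "prime p \<Longrightarrow> a \<noteq> 0 \<Longrightarrow> padic_val p (of_int a) = int (multiplicity (int p) a)"
  using padic_val_of_int_divide[of p a 1] by simp

lemma padic_val_of_prime:
  assumes "prime p" "prime q"
  shows "padic_val p (of_nat q) = (if p = q then 1 else 0)"
proof -
  have "padic_val p (of_nat q) = int (multiplicity p q)"
    using padic_val_of_int[OF assms(1), of "int q"] assms(2)
    by (simp add: multiplicity_int_int prime_gt_0_nat)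
  thus ?thesis
    using assms by (simp add: prime_multiplicity_other prime_imp_prime_elem)
qed

lemma padic_val_mult:
  assumes "prime p" "r \<noteq> 0" "s \<noteq> 0"
  shows "padic_val p (r * s) = padic_val p r + padic_val p s"
proof -
  obtain a b where ab: "b > 0" "r = of_int a / of_int b" by (rule rat_cases_of_int_divide)
  obtain c d where cd: "d > 0" "s = of_int c / of_int d" by (rule rat_cases_of_int_divide)
  have nz: "a \<noteq> 0" "c \<noteq> 0" and p: "prime_elem (int p)" using assms ab cd by auto
  have "r * s = of_int (a * c) / of_int (b * d)" using ab cd by simp
  hence "padic_val p (r * s) = int (multiplicity (int p) (a * c)) - int (multiplicity (int p) (b * d))"
    using padic_val_of_int_divide[OF assms(1), of "a * c" "b * d"] ab cd nz by simp
  thus ?thesis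
    using assms(1) ab cd nz p by (simp add: padic_val_of_int_divide prime_elem_multiplicity_mult_distrib)
qed

lemma multiplicity_add_ge_min:
  fixes x y :: "'a :: factorial_semiring"
  assumes "x + y \<noteq> 0" "\<not> is_unit q"
  shows "multiplicity q (x + y) \<ge> min (multiplicity q x) (multiplicity q y)"
proof (rule multiplicity_geI[OF assms])
  have "q ^ min (multiplicity q x) (multiplicity q y) dvd x" "q ^ min (multiplicity q x) (multiplicity q y) dvd y"
    by (meson dvd_trans le_imp_power_dvd min.cobounded1 min.cobounded2 multiplicity_dvd)+
  thus "q ^ min (multiplicity q x) (multiplicity q y) dvd x + y" by simp
qed

lemma padic_val_add_ge_min:
  assumes "prime p" "r \<noteq> 0" "s \<noteq> 0" "r + s \<noteq> 0"
  shows "padic_val p (r + s) \<ge> min (padic_val p r) (padic_val p s)"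
proof -
  obtain a b where ab: "b > 0" "r = of_int a / of_int b" by (rule rat_cases_of_int_divide)
  obtain c d where cd: "d > 0" "s = of_int c / of_int d" by (rule rat_cases_of_int_divide)
  define M where "M x = int (multiplicity (int p) x)" for x
  have p: "prime_elem (int p)" using assms(1) by simp
  have nz: "a \<noteq> 0" "c \<noteq> 0" using assms ab cd by auto
  have rs: "r + s = of_int (a * d + c * b) / of_int (b * d)"
    using ab cd by (simp add: field_simps)
  hence sum_nz: "a * d + c * b \<noteq> 0" using assms(4) by (metis div_0 of_int_0)
  have M_mult: "M (x * y) = M x + M y" if "x \<noteq> 0" "y \<noteq> 0" for x y
    using that p by (simp add: M_def prime_elem_multiplicity_mult_distrib)
  have "M (a * d + c * b) \<ge> min (M (a * d)) (M (c * b))"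
    using multiplicity_add_ge_min[OF sum_nz prime_elem_not_unit[OF p]] by (simp add: M_def)
  moreover have "padic_val p (r + s) = M (a * d + c * b) - M (b * d)"
    unfolding rs M_def using ab cd by (intro padic_val_of_int_divide[OF assms(1) sum_nz]) simp
  moreover have "padic_val p r = M a - M b" "padic_val p s = M c - M d"
    using assms(1) ab cd nz by (simp_all add: M_def padic_val_of_int_divide)
  moreover have "M (a * d) = M a + M d" "M (c * b) = M c + M b" "M (b * d) = M b + M d"
    using ab cd nz by (simp_all add: M_mult)
  ultimately show ?thesis by linarith
qed

lemma padic_abs_nonneg: "padic_abs p r \<ge> 0"
  by (simp add: padic_abs_def)

lemma padic_abs_pos: "prime p \<Longrightarrow> r \<noteq> 0 \<Longrightarrow> padic_abs p r > 0"
  by (simp add: padic_abs_def prime_gt_0_nat)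

lemma padic_abs_mult:
  "prime p \<Longrightarrow> padic_abs p (r * s) = padic_abs p r * padic_abs p s"
  by (auto simp: padic_abs_def padic_val_mult powr_add[symmetric] algebra_simps)

lemma padic_abs_add_le_max:
  assumes "prime p"
  shows "padic_abs p (r + s) \<le> max (padic_abs p r) (padic_abs p s)"
proof (cases "r = 0 \<or> s = 0 \<or> r + s = 0")
  case True
  thus ?thesis by (auto simp: padic_abs_def le_max_iff_disj)
next
  case False
  hence "padic_val p (r + s) \<ge> min (padic_val p r) (padic_val p s)"
    using padic_val_add_ge_min[OF assms] by blast
  moreover have "real p > 1" using prime_gt_1_nat[OF assms] by simp
  ultimately have "padic_abs p (r + s) \<le> real p powr (- real_of_int (min (padic_val p r) (padic_val p s)))"
    using False by (auto simp: padic_abs_def intro: powr_mono)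
  thus ?thesis
    using False by (auto simp: padic_abs_def min_def split: if_splits)
qed

lemma padic_abs_of_int_le_1:
  assumes "prime p"
  shows "padic_abs p (of_int a) \<le> 1"
proof (cases "a = 0")
  case False
  have "1 \<le> real p powr real (multiplicity (int p) a)"
    using prime_gt_1_nat[OF assms] by (intro ge_one_powr_ge_zero) auto
  thus ?thesis using False assms by (simp add: padic_abs_def padic_val_of_int powr_minus field_simps)
qed (simp add: padic_abs_def)

lemma padic_abs_inject:
  assumes "prime p" "prime q" "padic_abs p = padic_abs q"
  shows "p = q"
proof (rule ccontr)
  assume "p \<noteq> q"
  hence "padic_abs q (of_nat p) = 1"
    using assms by (simp add: padic_abs_def padic_val_of_prime prime_gt_0_nat)
  moreover have "padic_abs p (of_nat p) = 1 / real p"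
    using assms(1) by (simp add: padic_abs_def padic_val_of_prime prime_gt_0_nat powr_minus_divide)
  ultimately show False
    using assms(3) prime_gt_1_nat[OF assms(1)] by simp
qed

section \<open>Non-Archimedean places of number fields\<close>

lemma number_field_mult: "number_field K \<Longrightarrow> x \<in> K \<Longrightarrow> y \<in> K \<Longrightarrow> x * y \<in> K"
  unfolding number_field_def by blast

lemma number_field_power: "number_field K \<Longrightarrow> x \<in> K \<Longrightarrow> x ^ n \<in> K"
  by (induction n) (auto simp: number_field_def)

lemma number_field_divide:
  assumes "number_field K" "x \<in> K" "y \<in> K"
  shows "x / y \<in> K"
  using assms unfolding number_field_def by (cases "y = 0") (auto simp: divide_inverse)

lemma number_field_of_nat: "number_field K \<Longrightarrow> of_nat n \<in> K"
  by (induction n) (auto simp: number_field_def)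

lemma number_field_of_int:
  assumes "number_field K"
  shows "of_int n \<in> K"
proof (cases "n \<ge> 0")
  case True
  thus ?thesis using number_field_of_nat[OF assms, of "nat n"] by simp
next
  case False
  hence "(of_int n :: complex) = 0 - of_nat (nat (- n))" by simp
  thus ?thesis using number_field_of_nat[OF assms] assms unfolding number_field_def by metis
qed

lemma number_field_of_rat:
  assumes "number_field K"
  shows "of_rat q \<in> K"
proof -
  obtain a b where "q = of_int a / of_int b" by (rule rat_cases_of_int_divide)
  thus ?thesis
    using number_field_divide[OF assms number_field_of_int[OF assms] number_field_of_int[OF assms]]
    by (simp add: of_rat_divide)
qed

lemma QQ_subset_number_field: "number_field K \<Longrightarrow> QQ \<subseteq> K"
  unfolding QQ_def using number_field_of_rat by blast

lemma number_field_QQ: "number_field QQ"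
  unfolding number_field_def QQ_def
proof (intro conjI ballI impI)
  show "\<exists>bs :: complex list. \<forall>x\<in>range of_rat. \<exists>q :: nat \<Rightarrow> rat. x = (\<Sum>i<length bs. of_rat (q i) * bs ! i)"
    by (intro exI[of _ "[1]"]) auto
qed (auto simp flip: of_rat_add of_rat_diff of_rat_mult of_rat_inverse intro: rangeI)

lemma place_prime_spec:
  assumes "nonarch_place K w"
  shows "prime (place_prime w)" "w (of_rat q) = padic_abs (place_prime w) q"
proof -
  obtain p where p: "prime p" "\<forall>q. w (of_rat q) = padic_abs p q"
    using assms unfolding nonarch_place_def by blast
  have "place_prime w = p"
    unfolding place_prime_def
  proof (rule the_equality)
    fix p' assume "prime p' \<and> (\<forall>q. w (of_rat q) = padic_abs p' q)"
    thus "p' = p" using p by (intro padic_abs_inject) (auto simp: fun_eq_iff)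
  qed (use p in blast)
  thus "prime (place_prime w)" "w (of_rat q) = padic_abs (place_prime w) q"
    using p by auto
qed

lemma nonarch_place_mult:
  "nonarch_place K w \<Longrightarrow> x \<in> K \<Longrightarrow> y \<in> K \<Longrightarrow> w (x * y) = w x * w y"
  unfolding nonarch_place_def by blast

lemma nonarch_place_1: "nonarch_place K w \<Longrightarrow> w 1 = 1"
  using place_prime_spec(1)[of K w] place_prime_spec(2)[of K w 1]
  by (simp add: padic_abs_def padic_val_def prime_gt_0_nat)

lemma nonarch_place_power:
  assumes "nonarch_place K w" "number_field K" "x \<in> K"
  shows "w (x ^ n) = w x ^ n"
  by (induction n)
    (simp_all add: nonarch_place_1[OF assms(1)] nonarch_place_mult[OF assms(1)] assms(3)
      number_field_power[OF assms(2,3)])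

lemma nonarch_place_sum_le:
  assumes "nonarch_place K w" "number_field K" "finite F" "M \<ge> 0"
    and "\<forall>i\<in>F. f i \<in> K \<and> w (f i) \<le> M"
  shows "sum f F \<in> K \<and> w (sum f F) \<le> M"
  using assms(3,5)
proof (induction F rule: finite_induct)
  case empty
  thus ?case using assms(1,2,4) unfolding nonarch_place_def number_field_def by auto
next
  case (insert i F)
  hence "w (f i + sum f F) \<le> max (w (f i)) (w (sum f F))"
    using assms(1) unfolding nonarch_place_def by blast
  thus ?case using insert assms(2) unfolding number_field_def by auto
qed

lemma nonarch_place_of_int_le_1: "nonarch_place K w \<Longrightarrow> w (of_int a) \<le> 1"
  using place_prime_spec[of K w] padic_abs_of_int_le_1 by (metis of_rat_of_int_eq)

text \<open>If \<open>w x > 1\<close>, the leading term of a monic integer relation for \<open>x\<close> would strictly dominate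
  all other terms, contradicting the ultrametric inequality.\<close>
lemma nonarch_place_le_1_if_algebraic_int:
  assumes w: "nonarch_place K w" and K: "number_field K" and x: "x \<in> K" "algebraic_int x"
  shows "w x \<le> 1"
proof (rule ccontr)
  assume "\<not> w x \<le> 1"
  hence x_gt_1: "w x > 1" by simp
  obtain m and c :: "nat \<Rightarrow> int" where m: "m > 0" and c: "x ^ m = (\<Sum>i<m. of_int (c i) * x ^ i)"
    using algebraic_int_monic_relation[OF x(2)] .
  have "of_int (c i) * x ^ i \<in> K \<and> w (of_int (c i) * x ^ i) \<le> w x ^ (m - 1)" if "i < m" for i
  proof
    show "of_int (c i) * x ^ i \<in> K"
      by (intro number_field_mult number_field_of_int number_field_power K x)
    have "w (of_int (c i) * x ^ i) = w (of_int (c i)) * w x ^ i"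
      by (simp add: nonarch_place_mult[OF w] number_field_of_int[OF K] number_field_power[OF K x(1)]
          nonarch_place_power[OF w K x(1)])
    also have "\<dots> \<le> 1 * w x ^ (m - 1)"
      using that x_gt_1 nonarch_place_of_int_le_1[OF w]
      by (intro mult_mono power_increasing) auto
    finally show "w (of_int (c i) * x ^ i) \<le> w x ^ (m - 1)" by simp
  qed
  hence "w (x ^ m) \<le> w x ^ (m - 1)"
    unfolding c using x_gt_1 by (intro conjunct2[OF nonarch_place_sum_le[OF w K]]) auto
  moreover have "w x ^ (m - 1) < w x ^ m"
    using x_gt_1 m by (intro power_strict_increasing) auto
  ultimately show False
    by (simp add: nonarch_place_power[OF w K x(1)])
qed

lemma nonarch_place_alg_int_unit:
  assumes w: "nonarch_place K w" and K: "number_field K" and x: "x \<in> K" "alg_int_unit x"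
  shows "w x = 1"
proof -
  have x0: "x \<noteq> 0" and inv: "inverse x \<in> K"
    using x K unfolding alg_int_unit_def number_field_def by auto
  have "w x \<le> 1" "w (inverse x) \<le> 1"
    using nonarch_place_le_1_if_algebraic_int[OF w K] x inv by (auto simp: alg_int_unit_iff)
  moreover have "w x * w (inverse x) = 1"
    using nonarch_place_mult[OF w x(1) inv] nonarch_place_1[OF w] x0 by simp
  moreover have "w x \<ge> 0"
    using w x(1) unfolding nonarch_place_def by auto
  ultimately have "1 \<le> w x * 1"
    by (metis mult_left_mono)
  thus ?thesis using \<open>w x \<le> 1\<close> by simp
qed

section \<open>The places of \<open>\<rat>\<close> and consistent maps\<close>

definition padic_place :: "nat \<Rightarrow> complex \<Rightarrow> real" where
  "padic_place p x = (if x \<in> QQ then padic_abs p (THE q. x = of_rat q) else 0)"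

lemma padic_place_of_rat: "padic_place p (of_rat q) = padic_abs p q"
proof -
  have "(THE q'. (of_rat q :: complex) = of_rat q') = q" by (rule the_equality) auto
  thus ?thesis by (simp add: padic_place_def QQ_def)
qed

lemma nonarch_place_padic_place:
  assumes "prime p"
  shows "nonarch_place QQ (padic_place p)"
  unfolding nonarch_place_def
proof (intro conjI allI ballI impI)
  fix x assume "x \<notin> QQ"
  thus "padic_place p x = 0" by (simp add: padic_place_def)
next
  fix x assume "x \<in> QQ"
  then obtain a where x: "x = of_rat a" unfolding QQ_def by auto
  show "0 \<le> padic_place p x" unfolding x padic_place_of_rat by (rule padic_abs_nonneg)
  show "padic_place p x = 0 \<longleftrightarrow> x = 0"
    unfolding x padic_place_of_rat using padic_abs_pos[OF assms, of a] by (auto simp: padic_abs_def)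
next
  fix x y assume "x \<in> QQ" "y \<in> QQ"
  then obtain a b where xy: "x = of_rat a" "y = of_rat b" unfolding QQ_def by auto
  show "padic_place p (x * y) = padic_place p x * padic_place p y"
    unfolding xy of_rat_mult[symmetric] padic_place_of_rat using padic_abs_mult[OF assms] by simp
  show "padic_place p (x + y) \<le> max (padic_place p x) (padic_place p y)"
    unfolding xy of_rat_add[symmetric] padic_place_of_rat using padic_abs_add_le_max[OF assms] by simp
qed (use assms padic_place_of_rat in blast)

lemma place_prime_padic_place:
  assumes "prime p"
  shows "place_prime (padic_place p) = p"
proof -
  have "prime (place_prime (padic_place p))" "padic_abs (place_prime (padic_place p)) = padic_abs p"
    using place_prime_spec[OF nonarch_place_padic_place[OF assms]]
    by (auto simp: fun_eq_iff padic_place_of_rat)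
  thus ?thesis using padic_abs_inject assms by blast
qed

lemma nonarch_place_QQ_eq_padic_place:
  assumes "nonarch_place QQ v"
  shows "v = padic_place (place_prime v)"
proof
  fix x
  show "v x = padic_place (place_prime v) x"
  proof (cases "x \<in> QQ")
    case True
    then obtain q where "x = of_rat q" unfolding QQ_def by auto
    thus ?thesis using place_prime_spec(2)[OF assms] by (simp add: padic_place_of_rat)
  next
    case False
    thus ?thesis using assms by (simp add: nonarch_place_def padic_place_def)
  qed
qed

definition places_above :: "complex set \<Rightarrow> nat \<Rightarrow> (complex \<Rightarrow> real) set" where
  "places_above K p = {w. nonarch_place K w \<and> place_prime w = p}"

lemma extensions_of_place_QQ:
  assumes v: "nonarch_place QQ v"
  shows "{w. nonarch_place K w \<and> (\<forall>x\<in>QQ. w x = v x)} = places_above K (place_prime v)"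
proof -
  have "(\<forall>x\<in>QQ. w x = v x) \<longleftrightarrow> place_prime w = place_prime v" if w: "nonarch_place K w" for w
  proof -
    have "(\<forall>x\<in>QQ. w x = v x) \<longleftrightarrow> (\<forall>q. padic_abs (place_prime w) q = padic_abs (place_prime v) q)"
      by (simp add: QQ_def place_prime_spec(2)[OF w] place_prime_spec(2)[OF v])
    also have "\<dots> \<longleftrightarrow> place_prime w = place_prime v"
      using padic_abs_inject place_prime_spec(1)[OF w] place_prime_spec(1)[OF v] by (auto simp: fun_eq_iff)
    finally show ?thesis .
  qed
  thus ?thesis by (auto simp: places_above_def)
qed

lemma consistent_sum_places_above:
  assumes "consistent c" "number_field K" "prime p"
  shows "(\<Sum>w\<in>places_above K p. c (K, w)) = c (QQ, padic_place p)"
proof -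
  have "c (QQ, padic_place p) = (\<Sum>w\<in>{w. nonarch_place K w \<and> (\<forall>x\<in>QQ. w x = padic_place p x)}. c (K, w))"
    using assms(1) number_field_QQ assms(2) QQ_subset_number_field[OF assms(2)]
      nonarch_place_padic_place[OF assms(3)]
    unfolding consistent_def by blast
  also have "\<dots> = (\<Sum>w\<in>places_above K p. c (K, w))"
    using extensions_of_place_QQ[OF nonarch_place_padic_place[OF assms(3)]]
    by (simp add: place_prime_padic_place[OF assms(3)])
  finally show ?thesis ..
qed

text \<open>An infinite sum is \<open>0\<close> in Isabelle, so a nonzero value of \<open>c\<close> at the \<open>p\<close>-adic place of \<open>\<rat>\<close>
  forces the set of places above \<open>p\<close> to be finite.\<close>
lemma finite_places_above:
  assumes "consistent c" "number_field K" "prime p" "c (QQ, padic_place p) \<noteq> 0"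
  shows "finite (places_above K p)"
  using consistent_sum_places_above[OF assms(1-3)] assms(4) by (metis sum.infinite)

section \<open>\<open>\<Phi>\<^sub>c\<close> on classes of rational numbers\<close>

lemma size_prime_factorization:
  fixes n :: nat
  assumes "n > 0"
  shows "size (prime_factorization n) = (\<Sum>p\<in>prime_factors n. multiplicity p n)"
  by (simp add: size_multiset_overloaded_eq count_prime_factorization_prime in_prime_factors_imp_prime)

definition padic_support :: "rat \<Rightarrow> nat set" where
  "padic_support r = {p. prime p \<and> padic_val p r \<noteq> 0}"

lemma Omega_eq_sum_padic_val:
  assumes "r \<noteq> 0"
  shows "finite (padic_support r)" "Omega r = (\<Sum>p\<in>padic_support r. padic_val p r)"
proof -
  obtain a b where q: "quotient_of r = (a, b)" by (cases "quotient_of r")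
  define A where "A = nat \<bar>a\<bar>"
  define B where "B = nat \<bar>b\<bar>"
  have "b > 0" using q quotient_of_denom_pos by blast
  moreover have "a \<noteq> 0" using quotient_of_div[OF q] assms by auto
  ultimately have AB: "A > 0" "B > 0" by (auto simp: A_def B_def)
  have val: "padic_val p r = int (multiplicity p A) - int (multiplicity p B)" for p
    by (simp add: padic_val_def q A_def B_def multiplicity_int_eq_nat_abs)
  define F where "F = prime_factors A \<union> prime_factors B"
  have "finite F" by (simp add: F_def)
  have "padic_support r \<subseteq> F"
    using AB by (auto simp: padic_support_def F_def val in_prime_factors_iff not_dvd_imp_multiplicity_0
        prime_multiplicity_gt_zero_iff)
  thus "finite (padic_support r)" using \<open>finite F\<close> by (rule finite_subset)
  have sum_F: "(\<Sum>p\<in>F. int (multiplicity p n)) = int (size (prime_factorization n))"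
    if "n \<in> {A, B}" for n
  proof -
    have "(\<Sum>p\<in>F. int (multiplicity p n)) = (\<Sum>p\<in>prime_factors n. int (multiplicity p n))"
      using that \<open>finite F\<close>
      by (intro sum.mono_neutral_right) (auto simp: F_def in_prime_factors_iff not_dvd_imp_multiplicity_0)
    thus ?thesis using that AB by (auto simp: size_prime_factorization)
  qed
  have "(\<Sum>p\<in>padic_support r. padic_val p r) = (\<Sum>p\<in>F. padic_val p r)"
    using \<open>padic_support r \<subseteq> F\<close> \<open>finite F\<close>
    by (intro sum.mono_neutral_left) (auto simp: padic_support_def F_def in_prime_factors_iff)
  also have "\<dots> = Omega r"
    using sum_F by (simp add: val sum_subtractf Omega_def q A_def[symmetric] B_def[symmetric])
  finally show "Omega r = (\<Sum>p\<in>padic_support r. padic_val p r)" ..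
qed

lemma Omega_of_prime: "prime p \<Longrightarrow> Omega (of_nat p) = 1"
  by (simp add: Omega_def of_rat_of_nat_eq quotient_of_int[of "int p", simplified] prime_factorization_prime)

lemma in_SK_QQ_piS_of_rat:
  assumes "r \<noteq> 0"
  shows "in_SK QQ (piS (of_rat r))"
proof -
  define x :: complex where "x = of_rat r"
  have x: "x \<noteq> 0" "x \<in> QQ" using assms by (simp_all add: x_def QQ_def)
  have "algebraic x" unfolding x_def by (rule rat_imp_algebraic) simp
  hence "piS x \<in> S_set" using x unfolding S_set_def by blast
  moreover have "(SOME y. y \<in> piS x) \<in> piS x" using piS_self[OF x(1)] by (rule someI)
  hence "powS (piS x) 1 = piS x" unfolding powS_def using piS_eqI x(1) by simp
  ultimately show ?thesis unfolding in_SK_def x_def[symmetric] using x by blast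
qed

lemma alg_int_unit_if_powS_piS_eq:
  assumes "x \<noteq> 0" "y \<noteq> 0" "powS (piS x) n = piS y"
  shows "alg_int_unit (y / x ^ n)"
proof -
  define x' where "x' = (SOME x'. x' \<in> piS x)"
  have "x' \<in> piS x" unfolding x'_def using piS_self[OF assms(1)] by (rule someI)
  hence x': "x' \<noteq> 0" "alg_int_unit (x' / x)" by (auto simp: piS_def)
  have "y \<in> piS (x' ^ n)"
    using assms(2,3) piS_self[of y] by (simp add: powS_def x'_def)
  hence "alg_int_unit (y / x' ^ n)" by (simp add: piS_def)
  moreover have "y / x ^ n = (y / x' ^ n) * (x' / x) ^ n"
    using x'(1) by (simp add: power_divide)
  ultimately show ?thesis
    using alg_int_unit_mult alg_int_unit_power x'(2) by presburger
qed

lemma normS_piS_of_rat: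
  assumes K: "number_field K" and "in_SK K (piS (of_rat r))" "r \<noteq> 0" and w: "nonarch_place K w"
  shows "normS K w (piS (of_rat r)) = padic_abs (place_prime w) r"
proof -
  define x :: complex where "x = of_rat r"
  have x: "x \<noteq> 0" "x \<in> K" using assms number_field_of_rat by (auto simp: x_def)
  define P where "P = (\<lambda>(n, y). n > 0 \<and> y \<in> K \<and> y \<noteq> 0 \<and> powS (piS x) n = piS y)"
  obtain n y where ny: "(SOME z. P z) = (n, y)" by (cases "SOME z. P z")
  have "\<exists>z. P z" using assms(2) by (auto simp: in_SK_def P_def x_def)
  hence "P (n, y)" using ny by (metis someI_ex)
  hence n: "n > 0" and y: "y \<in> K" "y \<noteq> 0" "powS (piS x) n = piS y" by (auto simp: P_def)
  define u where "u = y / x ^ n"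
  have u: "alg_int_unit u" "u \<in> K"
    using alg_int_unit_if_powS_piS_eq[OF x(1) y(2,3)] number_field_divide[OF K y(1) number_field_power[OF K x(2)]]
    by (simp_all add: u_def)
  have "w y = w (x ^ n * u)" using x(1) by (simp add: u_def)
  also have "\<dots> = padic_abs (place_prime w) r ^ n"
    using nonarch_place_mult[OF w number_field_power[OF K x(2)] u(2)] nonarch_place_alg_int_unit[OF w K u(2,1)]
      nonarch_place_power[OF w K x(2)] place_prime_spec(2)[OF w] by (simp add: x_def)
  finally have "normS K w (piS x) = (padic_abs (place_prime w) r ^ n) powr (1 / real n)"
    using ny by (simp add: normS_def P_def)
  also have "\<dots> = padic_abs (place_prime w) r"
    using n padic_abs_pos[OF place_prime_spec(1)[OF w] assms(3)]
    by (simp add: powr_realpow[symmetric] powr_powr)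
  finally show ?thesis by (simp add: x_def)
qed

lemma PhiS_piS_of_rat:
  assumes "r \<noteq> 0"
  obtains K where "number_field K"
    "PhiS c (piS (of_rat r)) = - (\<Sum>w\<in>{w. nonarch_place K w \<and> padic_val (place_prime w) r \<noteq> 0}.
        real_of_rat (c (K, w)) * real_of_int (padic_val (place_prime w) r))"
proof -
  define K where "K = (SOME K. number_field K \<and> in_SK K (piS (of_rat r)))"
  have "number_field K \<and> in_SK K (piS (of_rat r))"
    unfolding K_def by (rule someI[where x = QQ]) (use number_field_QQ in_SK_QQ_piS_of_rat[OF assms] in blast)
  hence K: "number_field K" and SK: "in_SK K (piS (of_rat r))" by auto
  have norm: "normS K w (piS (of_rat r)) = real (place_prime w) powr - real_of_int (padic_val (place_prime w) r)"
    and p_gt_1: "real (place_prime w) > 1" if "nonarch_place K w" for w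
    using normS_piS_of_rat[OF K SK assms that] prime_gt_1_nat[OF place_prime_spec(1)[OF that]] assms
    by (auto simp: padic_abs_def)
  have "normS K w (piS (of_rat r)) \<noteq> 1 \<longleftrightarrow> padic_val (place_prime w) r \<noteq> 0"
    if "nonarch_place K w" for w
    by (simp add: norm[OF that] powr_eq_one_iff[OF p_gt_1[OF that]])
  hence "{w. nonarch_place K w \<and> normS K w (piS (of_rat r)) \<noteq> 1}
      = {w. nonarch_place K w \<and> padic_val (place_prime w) r \<noteq> 0}"
    by blast
  moreover have "real_of_rat (c (K, w)) / ln (real (place_prime w)) * ln (normS K w (piS (of_rat r)))
      = - (real_of_rat (c (K, w)) * real_of_int (padic_val (place_prime w) r))" if "nonarch_place K w" for w
    using p_gt_1[OF that] by (simp add: norm[OF that] ln_powr)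
  ultimately show ?thesis
    using K that unfolding PhiS_def K_def[symmetric] Let_def by (simp add: sum_negf)
qed

lemma PhiS_piS_of_prime:
  assumes c: "consistent c" and p: "prime p"
  shows "PhiS c (piS (of_nat p)) = - real_of_rat (c (QQ, padic_place p))"
proof -
  have "of_nat p \<noteq> (0 :: rat)" using p by (simp add: prime_gt_0_nat)
  then obtain K where K: "number_field K" and Phi:
    "PhiS c (piS (of_rat (of_nat p))) = - (\<Sum>w\<in>{w. nonarch_place K w \<and> padic_val (place_prime w) (of_nat p) \<noteq> 0}.
        real_of_rat (c (K, w)) * real_of_int (padic_val (place_prime w) (of_nat p)))"
    by (rule PhiS_piS_of_rat)
  have val: "padic_val (place_prime w) (of_nat p) = (if place_prime w = p then 1 else 0)"
    if "nonarch_place K w" for w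
    using padic_val_of_prime[OF place_prime_spec(1)[OF that] p] .
  hence places: "{w. nonarch_place K w \<and> padic_val (place_prime w) (of_nat p) \<noteq> 0} = places_above K p"
    unfolding places_above_def by (metis (lifting) one_neq_zero)
  have one: "padic_val (place_prime w) (of_nat p) = 1" if "w \<in> places_above K p" for w
  proof -
    have w: "nonarch_place K w" "place_prime w = p" using that by (auto simp: places_above_def)
    show ?thesis using val[OF w(1)] w(2) by simp
  qed
  have "PhiS c (piS (of_nat p)) = - (\<Sum>w\<in>places_above K p.
      real_of_rat (c (K, w)) * real_of_int (padic_val (place_prime w) (of_nat p)))"
    using Phi places by simp
  also have "\<dots> = - (\<Sum>w\<in>places_above K p. real_of_rat (c (K, w)))"
    using one by simp
  also have "\<dots> = - real_of_rat (c (QQ, padic_place p))"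
    by (simp add: of_rat_sum[symmetric] consistent_sum_places_above[OF c K p])
  finally show ?thesis .
qed

lemma PhiS_piS_of_rat_eq_Omega:
  assumes c: "consistent c" and minus_one: "\<forall>p. prime p \<longrightarrow> c (QQ, padic_place p) = -1"
    and "r \<noteq> 0"
  shows "PhiS c (piS (of_rat r)) = real_of_int (Omega r)"
proof -
  obtain K where K: "number_field K" and Phi:
    "PhiS c (piS (of_rat r)) = - (\<Sum>w\<in>{w. nonarch_place K w \<and> padic_val (place_prime w) r \<noteq> 0}.
        real_of_rat (c (K, w)) * real_of_int (padic_val (place_prime w) r))"
    using PhiS_piS_of_rat[OF \<open>r \<noteq> 0\<close>] by blast
  have places: "{w. nonarch_place K w \<and> padic_val (place_prime w) r \<noteq> 0} = (\<Union>p\<in>padic_support r. places_above K p)"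
    by (auto simp: places_above_def padic_support_def place_prime_spec(1))
  have "(\<Sum>w\<in>places_above K p. real_of_rat (c (K, w)) * real_of_int (padic_val (place_prime w) r))
      = - real_of_int (padic_val p r)" if "p \<in> padic_support r" for p
  proof -
    have p: "prime p" using that by (simp add: padic_support_def)
    have "(\<Sum>w\<in>places_above K p. real_of_rat (c (K, w)) * real_of_int (padic_val (place_prime w) r))
        = real_of_rat (\<Sum>w\<in>places_above K p. c (K, w)) * real_of_int (padic_val p r)"
      by (simp add: places_above_def of_rat_sum sum_distrib_right)
    thus ?thesis using consistent_sum_places_above[OF c K p] minus_one p by simp
  qed
  moreover have "finite (places_above K p)" if "p \<in> padic_support r" for p
    using that minus_one by (intro finite_places_above[OF c K]) (auto simp: padic_support_def)
  ultimately have "PhiS c (piS (of_rat r)) = (\<Sum>p\<in>padic_support r. real_of_int (padic_val p r))"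
    unfolding Phi places using Omega_eq_sum_padic_val(1)[OF \<open>r \<noteq> 0\<close>]
    by (subst sum.UNION_disjoint) (auto simp: places_above_def sum_negf)
  thus ?thesis by (simp add: Omega_eq_sum_padic_val(2)[OF \<open>r \<noteq> 0\<close>])
qed

theorem theorem2p1:
  fixes c :: "complex set \<times> (complex \<Rightarrow> real) \<Rightarrow> rat"
  assumes "consistent c"
  shows "(\<forall>r :: rat. r \<noteq> 0 \<longrightarrow> PhiS c (piS (of_rat r)) = real_of_int (Omega r))
     \<longleftrightarrow> (\<forall>v. nonarch_place QQ v \<longrightarrow> c (QQ, v) = -1)"
proof
  assume extends_Omega: "\<forall>r :: rat. r \<noteq> 0 \<longrightarrow> PhiS c (piS (of_rat r)) = real_of_int (Omega r)"
  show "\<forall>v. nonarch_place QQ v \<longrightarrow> c (QQ, v) = -1"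
  proof (intro allI impI)
    fix v assume v: "nonarch_place QQ v"
    define p where "p = place_prime v"
    have p: "prime p" using place_prime_spec(1)[OF v] by (simp add: p_def)
    have "PhiS c (piS (of_nat p)) = 1"
      using extends_Omega[rule_format, of "of_nat p"] Omega_of_prime[OF p] p by (simp add: prime_gt_0_nat)
    hence "real_of_rat (c (QQ, padic_place p)) = real_of_rat (-1)"
      using PhiS_piS_of_prime[OF assms p] by simp
    thus "c (QQ, v) = -1"
      using nonarch_place_QQ_eq_padic_place[OF v] by (simp only: of_rat_eq_iff p_def)
  qed
next
  assume "\<forall>v. nonarch_place QQ v \<longrightarrow> c (QQ, v) = -1"
  hence "\<forall>p. prime p \<longrightarrow> c (QQ, padic_place p) = -1"
    using nonarch_place_padic_place by blast
  thus "\<forall>r :: rat. r \<noteq> 0 \<longrightarrow> PhiS c (piS (of_rat r)) = real_of_int (Omega r)"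
    using PhiS_piS_of_rat_eq_Omega[OF assms] by blast
qed

end
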